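(* Consider sequential first-price auctions in which all buyers have additive valuations. Then: (a) there is an absolute constant $c>0$ such that for every instance with $m$ items (any number of additive buyers, any selling-order function and any tie-breaking rule), the social welfare of every pure subgame perfect equilibrium is at least $c\cdot \mathrm{OPT}/m$, where $\mathrm{OPT}$ is the maximum possible social welfare; i.e., the price of anarchy is $O(m)$. (b) There is an absolute constant $c'>0$ such that for every $m$ there is an instance with exactly two additive buyers and $m$ identical items (every buyer has the same value for every item, so the selling order is irrelevant) whose price of anarchy is at least $c' m$. Hence the price of anarchy of sequential first-price auctions with additive buyers is $\Theta(m)$.
   Context: Setting (sequential first-price auctions): there is a set $M$ of $m$ items and a set $N$ of $n$ buyers. Buyer $i$ has a valuation $v_i:2^M\to\mathbb{R}_{\ge 0}$ with $v_i(\emptyset)=0$ and quasi-linear utility (value of the set of items obtained minus total payment). A buyer is additive if there are $v_{i,j}\ge 0$ with $v_i(S)=\sum_{j\in S}v_{i,j}$. Items are sold one at a time; each item is sold by a sealed-bid first-price auction without reserve price: every buyer submits a nonnegative bid, a highest bidder wins (ties broken by a tie-breaking rule fixed by the seller) and pays his bid. The seller fixes in advance a selling-order function choosing the next item as a function of the allocation of the items sold so far, together with the tie-breaking rule. There is full information (all valuations are common knowledge). A pure subgame perfect equilibrium (SPE) is a profile of pure strategies (a bid for each buyer at each node of the game tree) that is a Nash equilibrium in every subgame. The social welfare of an outcome is $\sum_i v_i(\text{bundle of } i)$. The price of anarchy of an instance is the ratio of the maximum social welfare over all allocations to the minimum social welfare of a pure SPE outcome. *)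

theory Defs
  imports Complex_Main "HOL-Library.FuncSet"
begin

text \<open>
  Buyers are 0..<n, items are 0..<m. An additive valuation is given by
  per-item values v i j (buyer i, item j).
  A node of the game tree is the history of bid profiles of the stages
  played so far, most recent first.
  An allocation (of items sold so far) is a partial map item => buyer.
\<close>

type_synonym profile = "nat \<Rightarrow> real"
type_synonym history = "profile list"
type_synonym order_fn = "(nat \<Rightarrow> nat option) \<Rightarrow> nat"
type_synonym tiebreak_fn = "history \<Rightarrow> profile \<Rightarrow> nat"
type_synonym strategy_profile = "nat \<Rightarrow> history \<Rightarrow> real"

definition valid_order :: "nat \<Rightarrow> order_fn \<Rightarrow> bool" where
  "valid_order m \<sigma> \<longleftrightarrow>
     (\<forall>A. dom A \<subseteq> {0..<m} \<longrightarrow> dom A \<noteq> {0..<m} \<longrightarrow> \<sigma> A \<in> {0..<m} - dom A)"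

definition valid_tiebreak :: "nat \<Rightarrow> tiebreak_fn \<Rightarrow> bool" where
  "valid_tiebreak n tb \<longleftrightarrow> (\<forall>h b. tb h b < n \<and> (\<forall>i<n. b i \<le> b (tb h b)))"

definition valid_bids :: "nat \<Rightarrow> profile \<Rightarrow> bool" where
  "valid_bids n b \<longleftrightarrow> (\<forall>i<n. 0 \<le> b i) \<and> (\<forall>i. n \<le> i \<longrightarrow> b i = 0)"

definition valid_node :: "nat \<Rightarrow> history \<Rightarrow> bool" where
  "valid_node n h \<longleftrightarrow> (\<forall>b\<in>set h. valid_bids n b)"

definition bidvec :: "nat \<Rightarrow> strategy_profile \<Rightarrow> history \<Rightarrow> profile" where
  "bidvec n s h = (\<lambda>i. if i < n then s i h else 0)"

primrec alloc :: "order_fn \<Rightarrow> tiebreak_fn \<Rightarrow> history \<Rightarrow> (nat \<Rightarrow> nat option)" where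
  "alloc \<sigma> tb [] = Map.empty"
| "alloc \<sigma> tb (b # h) = (alloc \<sigma> tb h)(\<sigma> (alloc \<sigma> tb h) \<mapsto> tb h b)"

primrec payment :: "tiebreak_fn \<Rightarrow> history \<Rightarrow> nat \<Rightarrow> real" where
  "payment tb [] i = 0"
| "payment tb (b # h) i = payment tb h i + (if tb h b = i then b i else 0)"

primrec playn :: "nat \<Rightarrow> strategy_profile \<Rightarrow> nat \<Rightarrow> history \<Rightarrow> history" where
  "playn n s 0 h = h"
| "playn n s (Suc k) h = playn n s k (bidvec n s h # h)"

definition outcome :: "nat \<Rightarrow> nat \<Rightarrow> strategy_profile \<Rightarrow> history \<Rightarrow> history" where
  "outcome n m s h = playn n s (m - length h) h"

definition bundle_value :: "nat \<Rightarrow> (nat \<Rightarrow> nat \<Rightarrow> real) \<Rightarrow> order_fn \<Rightarrow> tiebreak_fn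
    \<Rightarrow> history \<Rightarrow> nat \<Rightarrow> real" where
  "bundle_value m v \<sigma> tb h i = (\<Sum>j<m. if alloc \<sigma> tb h j = Some i then v i j else 0)"

definition utility :: "nat \<Rightarrow> (nat \<Rightarrow> nat \<Rightarrow> real) \<Rightarrow> order_fn \<Rightarrow> tiebreak_fn
    \<Rightarrow> history \<Rightarrow> nat \<Rightarrow> real" where
  "utility m v \<sigma> tb h i = bundle_value m v \<sigma> tb h i - payment tb h i"

definition welfare :: "nat \<Rightarrow> nat \<Rightarrow> (nat \<Rightarrow> nat \<Rightarrow> real) \<Rightarrow> order_fn \<Rightarrow> tiebreak_fn
    \<Rightarrow> history \<Rightarrow> real" where
  "welfare n m v \<sigma> tb h = (\<Sum>i<n. bundle_value m v \<sigma> tb h i)"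

definition is_SPE :: "nat \<Rightarrow> nat \<Rightarrow> (nat \<Rightarrow> nat \<Rightarrow> real) \<Rightarrow> order_fn \<Rightarrow> tiebreak_fn
    \<Rightarrow> strategy_profile \<Rightarrow> bool" where
  "is_SPE n m v \<sigma> tb s \<longleftrightarrow>
     (\<forall>i<n. \<forall>h. valid_node n h \<and> length h < m \<longrightarrow> 0 \<le> s i h) \<and>
     (\<forall>h. valid_node n h \<and> length h < m \<longrightarrow>
        (\<forall>i<n. \<forall>d::history \<Rightarrow> real.
           (\<forall>h'. valid_node n h' \<and> length h' < m \<longrightarrow> 0 \<le> d h') \<longrightarrow>
           utility m v \<sigma> tb (outcome n m (s(i := d)) h) i
             \<le> utility m v \<sigma> tb (outcome n m s h) i))"

definition opt :: "nat \<Rightarrow> nat \<Rightarrow> (nat \<Rightarrow> nat \<Rightarrow> real) \<Rightarrow> real" where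
  "opt n m v = Max ((\<lambda>f. \<Sum>j<m. v (f j) j) ` ({0..<m} \<rightarrow>\<^sub>E {0..<n}))"

end

theory Submission
  imports Defs
begin

text \<open>Upper bound: let buyer \<open>i\<close> value item \<open>j\<close> most, so \<open>v i j \<ge> OPT / m\<close>. At the node of the
  equilibrium play where \<open>j\<close> is sold, buyer \<open>i\<close> could outbid the winner \<open>w\<close> by \<open>\<epsilon>\<close> and then
  follow the equilibrium, so subgame perfection makes his final bundle worth at least
  \<open>v i j - b\<^sub>w - \<epsilon>\<close>; and \<open>w\<close> could bid 0 from then on, so his final bundle is worth at least his
  winning bid \<open>b\<^sub>w\<close>. Hence the welfare is at least \<open>v i j / 2 \<ge> OPT / (2m)\<close>.

  Lower bound: if buyers 0 and 1 value every item at 1 and 0 respectively, an equilibrium that threatens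
  buyer 0 with competition as soon as he bids lets him win only the last item, so the welfare
  is 1 while \<open>OPT = m\<close>.\<close>

section \<open>Histories and allocations\<close>

lemma alloc_dom:
  assumes "valid_order m \<sigma>" and "length h \<le> m"
  shows "dom (alloc \<sigma> tb h) \<subseteq> {0..<m} \<and> card (dom (alloc \<sigma> tb h)) = length h"
  using assms(2)
proof (induction h)
  case Nil
  then show ?case by simp
next
  case (Cons b h)
  then have IH: "dom (alloc \<sigma> tb h) \<subseteq> {0..<m}" "card (dom (alloc \<sigma> tb h)) = length h"
    and "length h < m" by auto
  then have "dom (alloc \<sigma> tb h) \<noteq> {0..<m}" by auto
  with IH(1) assms(1) have "\<sigma> (alloc \<sigma> tb h) \<in> {0..<m} - dom (alloc \<sigma> tb h)"
    unfolding valid_order_def by blast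
  moreover have "finite (dom (alloc \<sigma> tb h))" using IH(1) finite_subset by blast
  moreover have "dom (alloc \<sigma> tb (b # h)) = insert (\<sigma> (alloc \<sigma> tb h)) (dom (alloc \<sigma> tb h))"
    by simp
  ultimately show ?case using IH by (simp only: card_insert_disjoint) auto
qed

lemma alloc_next_item:
  assumes "valid_order m \<sigma>" and "length h < m"
  shows "\<sigma> (alloc \<sigma> tb h) < m" and "alloc \<sigma> tb h (\<sigma> (alloc \<sigma> tb h)) = None"
proof -
  have "dom (alloc \<sigma> tb h) \<subseteq> {0..<m}" "dom (alloc \<sigma> tb h) \<noteq> {0..<m}"
    using alloc_dom[OF assms(1), of h tb] assms(2) by auto
  with assms(1) have "\<sigma> (alloc \<sigma> tb h) \<in> {0..<m} - dom (alloc \<sigma> tb h)"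
    unfolding valid_order_def by blast
  then show "\<sigma> (alloc \<sigma> tb h) < m" and "alloc \<sigma> tb h (\<sigma> (alloc \<sigma> tb h)) = None" by auto
qed

lemma bundle_value_Cons:
  assumes "valid_order m \<sigma>" and "length h < m"
  shows "bundle_value m v \<sigma> tb (b # h) i
    = bundle_value m v \<sigma> tb h i + (if tb h b = i then v i (\<sigma> (alloc \<sigma> tb h)) else 0)"
proof -
  define j0 where "j0 = \<sigma> (alloc \<sigma> tb h)"
  have j0: "j0 < m" "alloc \<sigma> tb h j0 = None"
    using alloc_next_item[OF assms] unfolding j0_def by auto
  have "bundle_value m v \<sigma> tb (b # h) i = (\<Sum>j<m. (if alloc \<sigma> tb h j = Some i then v i j else 0)
          + (if j = j0 then (if tb h b = i then v i j0 else 0) else 0))"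
    unfolding bundle_value_def by (rule sum.cong) (auto simp: j0_def[symmetric] j0)
  also have "\<dots> = bundle_value m v \<sigma> tb h i + (if tb h b = i then v i j0 else 0)"
    unfolding bundle_value_def sum.distrib using j0 by simp
  finally show ?thesis unfolding j0_def .
qed

lemma utility_Cons:
  assumes "valid_order m \<sigma>" and "length h < m"
  shows "utility m v \<sigma> tb (b # h) i
    = utility m v \<sigma> tb h i + (if tb h b = i then v i (\<sigma> (alloc \<sigma> tb h)) - b i else 0)"
  using bundle_value_Cons[OF assms, of v tb b i] unfolding utility_def by auto

lemma bundle_value_nonneg: "(\<And>i j. 0 \<le> v i j) \<Longrightarrow> 0 \<le> bundle_value m v \<sigma> tb h i"
  unfolding bundle_value_def by (rule sum_nonneg) auto

lemma bundle_value_le_welfare: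
  assumes "\<And>i j. 0 \<le> v i j" and "i < n"
  shows "bundle_value m v \<sigma> tb h i \<le> welfare n m v \<sigma> tb h"
  unfolding welfare_def
  by (rule member_le_sum) (use assms bundle_value_nonneg in auto)

lemma bidvec_below [simp]: "i < n \<Longrightarrow> bidvec n t h i = t i h"
  unfolding bidvec_def by simp

lemma length_playn [simp]: "length (playn n s k h) = k + length h"
  by (induction k arbitrary: h) auto

lemma playn_Suc_Cons: "playn n s (Suc k) h = bidvec n s (playn n s k h) # playn n s k h"
  by (induction k arbitrary: h) auto

lemma playn_add: "playn n s (a + b) h = playn n s b (playn n s a h)"
  by (induction a arbitrary: h) auto

lemma playn_cong:
  assumes "\<And>i h'. length h \<le> length h' \<Longrightarrow> length h' < length h + k \<Longrightarrow> s i h' = s' i h'"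
  shows "playn n s k h = playn n s' k h"
  using assms
proof (induction k arbitrary: h)
  case 0
  then show ?case by simp
next
  case (Suc k)
  have "bidvec n s h = bidvec n s' h" using Suc.prems unfolding bidvec_def by auto
  moreover have "playn n s k (bidvec n s h # h) = playn n s' k (bidvec n s h # h)"
    by (rule Suc.IH) (use Suc.prems in auto)
  ultimately show ?case by simp
qed

lemma outcome_Cons:
  assumes "length h < m"
  shows "outcome n m s (bidvec n s h # h) = outcome n m s h"
proof -
  have "m - length h = Suc (m - length (bidvec n s h # h))" using assms by simp
  then show ?thesis unfolding outcome_def by simp
qed

lemma outcome_playn:
  "length h + k \<le> m \<Longrightarrow> outcome n m s (playn n s k h) = outcome n m s h"
  unfolding outcome_def using playn_add[of n s k "m - length h - k" h]
  by (simp add: add.commute diff_diff_add)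

lemma outcome_deviate_at_node:
  assumes "length h < m"
  shows "outcome n m (s(i := (s i)(h := B))) h
    = outcome n m s (bidvec n (s(i := (s i)(h := B))) h # h)"
proof -
  have "m - length h = Suc (m - length (bidvec n s h # h))" using assms by simp
  then show ?thesis unfolding outcome_def by (simp del: length_Cons) (rule playn_cong, auto)
qed

lemma utility_le_playn_zero_bids:
  assumes "valid_order m \<sigma>" and "\<And>i j. 0 \<le> v i j" and "t i = (\<lambda>_. 0)" and "i < n"
    and "length h + k \<le> m"
  shows "utility m v \<sigma> tb h i \<le> utility m v \<sigma> tb (playn n t k h) i"
  using assms(5)
proof (induction k arbitrary: h)
  case 0
  then show ?case by simp
next
  case (Suc k)
  have "bidvec n t h i = 0" using assms(3,4) unfolding bidvec_def by simp
  then have "utility m v \<sigma> tb h i \<le> utility m v \<sigma> tb (bidvec n t h # h) i"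
    using utility_Cons[OF assms(1), of h v tb "bidvec n t h" i] Suc.prems assms(2) by auto
  also have "\<dots> \<le> utility m v \<sigma> tb (playn n t k (bidvec n t h # h)) i"
    by (rule Suc.IH) (use Suc.prems in simp)
  finally show ?case by simp
qed

lemma ex_stage_selling_item:
  assumes "valid_order m \<sigma>" and "j < m"
  shows "\<exists>k<m. \<sigma> (alloc \<sigma> tb (playn n s k [])) = j"
proof -
  define sold where "sold k \<longleftrightarrow> j \<in> dom (alloc \<sigma> tb (playn n s k []))" for k
  have "dom (alloc \<sigma> tb (playn n s m [])) = {0..<m}"
    using alloc_dom[OF assms(1), of "playn n s m []" tb] by (intro card_subset_eq) auto
  then have "sold m" using assms(2) unfolding sold_def by simp
  moreover have "\<not> sold 0" unfolding sold_def by simp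
  ultimately obtain k where "k < m" "\<not> sold k" "sold (Suc k)"
  proof (induction m)
    case (Suc m)
    then show ?case by (cases "sold m") (auto intro: less_SucI)
  qed simp
  then show ?thesis unfolding sold_def playn_Suc_Cons by (auto simp del: playn.simps split: if_splits)
qed

lemma finite_allocation_welfares:
  fixes v :: "nat \<Rightarrow> nat \<Rightarrow> real"
  shows "finite ((\<lambda>f. \<Sum>j<m. v (f j) j) ` ({0..<m} \<rightarrow>\<^sub>E {0..<n}))"
  by (intro finite_imageI finite_PiE) auto

lemma allocation_welfare_le_opt:
  "f \<in> {0..<m} \<rightarrow>\<^sub>E {0..<n} \<Longrightarrow> (\<Sum>j<m. v (f j) j) \<le> opt n m v"
  unfolding opt_def by (rule Max_ge) (use finite_allocation_welfares in auto)

lemma opt_le_bound: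
  assumes "1 \<le> n" and "\<And>i j. i < n \<Longrightarrow> j < m \<Longrightarrow> v i j \<le> M"
  shows "opt n m v \<le> real m * M"
  unfolding opt_def
proof (rule Max.boundedI[OF finite_allocation_welfares])
  have "(\<lambda>j. if j < m then 0 else undefined) \<in> {0..<m} \<rightarrow>\<^sub>E {0..<n}" using assms(1) by auto
  then show "(\<lambda>f. \<Sum>j<m. v (f j) j) ` ({0..<m} \<rightarrow>\<^sub>E {0..<n}) \<noteq> {}" by blast
next
  fix a assume "a \<in> (\<lambda>f. \<Sum>j<m. v (f j) j) ` ({0..<m} \<rightarrow>\<^sub>E {0..<n})"
  then obtain f where f: "f \<in> {0..<m} \<rightarrow>\<^sub>E {0..<n}" "a = (\<Sum>j<m. v (f j) j)" by auto
  have "(\<Sum>j<m. v (f j) j) \<le> (\<Sum>j<m. M)" using f(1) by (intro sum_mono assms(2)) auto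
  then show "a \<le> real m * M" using f(2) by simp
qed

section \<open>Welfare of equilibria\<close>

locale additive_SPE =
  fixes n m :: nat and v :: "nat \<Rightarrow> nat \<Rightarrow> real" and \<sigma> :: order_fn and tb :: tiebreak_fn
    and s :: strategy_profile
  assumes v_nonneg: "\<And>i j. 0 \<le> v i j"
    and order: "valid_order m \<sigma>"
    and tiebreak: "valid_tiebreak n tb"
    and SPE: "is_SPE n m v \<sigma> tb s"
begin

abbreviation u :: "history \<Rightarrow> nat \<Rightarrow> real" where
  "u \<equiv> utility m v \<sigma> tb"

abbreviation bundle_val :: "history \<Rightarrow> nat \<Rightarrow> real" where
  "bundle_val \<equiv> bundle_value m v \<sigma> tb"

lemma strategy_nonneg: "i < n \<Longrightarrow> valid_node n h \<Longrightarrow> length h < m \<Longrightarrow> 0 \<le> s i h"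
  using SPE unfolding is_SPE_def by blast

lemma no_profitable_deviation:
  assumes "valid_node n h" "length h < m" "i < n"
    and "\<And>h'. valid_node n h' \<Longrightarrow> length h' < m \<Longrightarrow> 0 \<le> d h'"
  shows "u (outcome n m (s(i := d)) h) i \<le> u (outcome n m s h) i"
  using SPE assms unfolding is_SPE_def by blast

lemma bidvec_nonneg: "valid_node n h \<Longrightarrow> length h < m \<Longrightarrow> 0 \<le> bidvec n s h i"
  unfolding bidvec_def using strategy_nonneg by auto

lemma valid_node_playn: "valid_node n h \<Longrightarrow> length h + k \<le> m \<Longrightarrow> valid_node n (playn n s k h)"
proof (induction k arbitrary: h)
  case (Suc k)
  then have "valid_bids n (bidvec n s h)"
    unfolding valid_bids_def using strategy_nonneg by (simp add: bidvec_def)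
  with Suc.prems have "valid_node n (bidvec n s h # h)" by (simp add: valid_node_def)
  with Suc.IH Suc.prems show ?case by simp
qed simp

lemma payment_le_playn:
  "valid_node n h \<Longrightarrow> length h + k \<le> m \<Longrightarrow> payment tb h i \<le> payment tb (playn n s k h) i"
proof (induction k arbitrary: h)
  case (Suc k)
  have "payment tb h i \<le> payment tb (bidvec n s h # h) i" using bidvec_nonneg Suc.prems by simp
  also have "\<dots> \<le> payment tb (playn n s (Suc k) h) i"
    using Suc.IH[of "bidvec n s h # h"] valid_node_playn[of h 1] Suc.prems by simp
  finally show ?case .
qed simp

lemma utility_gain_le_bundle_value:
  assumes "valid_node n h" "length h \<le> m"
  shows "u (outcome n m s h) i - u h i \<le> bundle_val (outcome n m s h) i"
proof -
  have "payment tb h i \<le> payment tb (outcome n m s h) i"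
    unfolding outcome_def using payment_le_playn[OF assms(1)] assms(2) by simp
  moreover have "0 \<le> bundle_val h i" using bundle_value_nonneg[of v, OF v_nonneg] .
  ultimately show ?thesis unfolding utility_def by linarith
qed

lemma utility_le_outcome:
  assumes "valid_node n h" "length h \<le> m" "i < n"
  shows "u h i \<le> u (outcome n m s h) i"
proof (cases "length h = m")
  case True
  then show ?thesis by (simp add: outcome_def)
next
  case False
  have "u h i \<le> u (outcome n m (s(i := (\<lambda>_. 0))) h) i"
    unfolding outcome_def by (rule utility_le_playn_zero_bids[OF order v_nonneg]) (use assms in auto)
  also have "\<dots> \<le> u (outcome n m s h) i"
    by (rule no_profitable_deviation) (use assms False in auto)
  finally show ?thesis .
qed

lemma winning_bid_le_bundle_value:
  assumes "valid_node n h" "length h < m" and w: "w = tb h (bidvec n s h)"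
  shows "bidvec n s h w \<le> bundle_val (outcome n m s h) w"
proof -
  define b where "b = bidvec n s h"
  have "w < n" using tiebreak w unfolding valid_tiebreak_def by simp
  have valid: "valid_node n (b # h)" "length (b # h) \<le> m"
    using valid_node_playn[of h 1] assms(1,2) unfolding b_def by auto
  have out: "outcome n m s (b # h) = outcome n m s h"
    unfolding b_def using outcome_Cons[OF assms(2)] .
  have "u h w \<le> u (outcome n m s h) w"
    using utility_le_outcome[OF assms(1) _ \<open>w < n\<close>] assms(2) by simp
  moreover have "payment tb (b # h) w \<le> payment tb (outcome n m s (b # h)) w"
    unfolding outcome_def by (rule payment_le_playn[OF valid(1)]) (use valid(2) in simp)
  then have "payment tb (b # h) w \<le> payment tb (outcome n m s h) w" unfolding out .
  moreover have "payment tb (b # h) w = payment tb h w + b w" using w b_def by simp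
  moreover have "0 \<le> bundle_val h w" using bundle_value_nonneg[of v, OF v_nonneg] .
  ultimately show ?thesis unfolding utility_def b_def by linarith
qed

lemma value_minus_outbid_le_bundle_value:
  assumes h: "valid_node n h" "length h < m" and i: "i < n" and "0 \<le> B"
    and outbid: "\<And>j. j < n \<Longrightarrow> j \<noteq> i \<Longrightarrow> bidvec n s h j < B"
  shows "v i (\<sigma> (alloc \<sigma> tb h)) - B \<le> bundle_val (outcome n m s h) i"
proof -
  define s' where "s' = s(i := (s i)(h := B))"
  define b' where "b' = bidvec n s' h"
  have b'_i: "b' i = B" and b'_other: "\<And>j. j \<noteq> i \<Longrightarrow> b' j = bidvec n s h j"
    using i unfolding b'_def s'_def bidvec_def by auto
  have wins: "tb h b' = i"
  proof (rule ccontr)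
    assume "tb h b' \<noteq> i"
    moreover have "tb h b' < n" "b' i \<le> b' (tb h b')"
      using tiebreak i unfolding valid_tiebreak_def by auto
    ultimately show False using b'_i b'_other outbid by fastforce
  qed
  have "0 \<le> b' j" for j
    using b'_i b'_other bidvec_nonneg[OF h] \<open>0 \<le> B\<close> by (cases "j = i") auto
  moreover have "b' j = 0" if "n \<le> j" for j using that by (simp add: b'_def bidvec_def)
  ultimately have "valid_bids n b'" unfolding valid_bids_def by blast
  then have valid': "valid_node n (b' # h)" using h(1) by (simp add: valid_node_def)
  have "u h i + v i (\<sigma> (alloc \<sigma> tb h)) - B = u (b' # h) i"
    using utility_Cons[OF order h(2)] wins b'_i by simp
  also have "\<dots> \<le> u (outcome n m s (b' # h)) i"
    using utility_le_outcome[OF valid' _ i] h(2) by simp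
  also have "outcome n m s (b' # h) = outcome n m s' h"
    unfolding b'_def s'_def using outcome_deviate_at_node[OF h(2)] by simp
  also have "u (outcome n m s' h) i \<le> u (outcome n m s h) i"
    unfolding s'_def by (rule no_profitable_deviation[OF h i]) (use strategy_nonneg i \<open>0 \<le> B\<close> in auto)
  finally have "u h i + v i (\<sigma> (alloc \<sigma> tb h)) - B \<le> u (outcome n m s h) i" .
  moreover have "u (outcome n m s h) i - u h i \<le> bundle_val (outcome n m s h) i"
    using utility_gain_le_bundle_value[OF h(1)] h(2) by simp
  ultimately show ?thesis by linarith
qed

lemma value_le_twice_welfare:
  assumes "i < n" "j < m"
  shows "v i j \<le> 2 * welfare n m v \<sigma> tb (outcome n m s [])"
proof -
  obtain k where "k < m" and sells: "\<sigma> (alloc \<sigma> tb (playn n s k [])) = j"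
    using ex_stage_selling_item[OF order assms(2)] by blast
  define h where "h = playn n s k []"
  define b where "b = bidvec n s h"
  define w where "w = tb h b"
  have h: "valid_node n h" "length h < m"
    using valid_node_playn[of "[]" k] \<open>k < m\<close> by (auto simp: h_def valid_node_def)
  have out: "outcome n m s h = outcome n m s []"
    unfolding h_def using outcome_playn[of "[]" k m] \<open>k < m\<close> by simp
  have sells_h: "\<sigma> (alloc \<sigma> tb h) = j" using sells by (simp add: h_def)
  have w: "w < n" "\<And>j. j < n \<Longrightarrow> b j \<le> b w"
    using tiebreak unfolding valid_tiebreak_def w_def by auto
  have "b w \<le> bundle_val (outcome n m s []) w"
    using winning_bid_le_bundle_value[OF h] out unfolding b_def w_def by simp
  moreover have "v i j - b w \<le> bundle_val (outcome n m s []) i"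
  proof (rule field_le_epsilon)
    fix e :: real assume "0 < e"
    have "0 \<le> b w + e" using bidvec_nonneg[OF h, of w] \<open>0 < e\<close> unfolding b_def by linarith
    moreover have "bidvec n s h j' < b w + e" if "j' < n" for j'
      using w(2)[OF that] \<open>0 < e\<close> unfolding b_def by linarith
    ultimately have "v i j - (b w + e) \<le> bundle_val (outcome n m s []) i"
      using value_minus_outbid_le_bundle_value[OF h assms(1)] sells_h out by simp
    then show "v i j - b w \<le> bundle_val (outcome n m s []) i + e" by simp
  qed
  moreover have le_welfare: "bundle_val (outcome n m s []) i' \<le> welfare n m v \<sigma> tb (outcome n m s [])"
    if "i' < n" for i'
    using bundle_value_le_welfare[of v, OF v_nonneg that] .
  ultimately show ?thesis using le_welfare[OF assms(1)] le_welfare[OF w(1)] by linarith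
qed

lemma opt_le_twice_welfare:
  assumes "1 \<le> n"
  shows "opt n m v \<le> 2 * real m * welfare n m v \<sigma> tb (outcome n m s [])"
  using opt_le_bound[of n m v, OF assms value_le_twice_welfare] by simp

end

theorem SPE_welfare_ge_half_opt_div:
  assumes "1 \<le> n" "1 \<le> m" "\<forall>i j. 0 \<le> v i j"
    and "valid_order m \<sigma>" "valid_tiebreak n tb" "is_SPE n m v \<sigma> tb s"
  shows "1/2 * opt n m v / real m \<le> welfare n m v \<sigma> tb (outcome n m s [])"
proof -
  interpret additive_SPE n m v \<sigma> tb s using assms(3-) by unfold_locales auto
  show ?thesis using opt_le_twice_welfare[OF assms(1)] assms(2) by (simp add: field_simps)
qed

section \<open>A two-buyer instance with price of anarchy \<open>m\<close>\<close>

text \<open>While buyer 0 has bid only 0 (the history is \<open>silent\<close>), both buyers bid 0 and ties go to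
  buyer 1, except on the last item. Once buyer 0 has bid anything else, both bid 1 forever and
  ties go to buyer 0, so no further item can give him positive utility. Hence buyer 0 gains
  nothing by bidding early, waits, and wins only the last item.\<close>

definition silent :: "history \<Rightarrow> bool" where
  "silent h \<longleftrightarrow> (\<forall>b\<in>set h. b 0 = 0)"

definition threat_tiebreak :: "nat \<Rightarrow> tiebreak_fn" where
  "threat_tiebreak m h b =
    (if b 1 > b 0 then 1 else if b 0 > b 1 then 0
     else if silent h \<and> length h + 1 < m then 1 else 0)"

definition threat_strategy :: strategy_profile where
  "threat_strategy i h = (if silent h then 0 else 1)"

definition unit_value :: "nat \<Rightarrow> nat \<Rightarrow> real" where
  "unit_value i j = (if i = 0 then 1 else 0)"

definition first_unsold :: "nat \<Rightarrow> order_fn" where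
  "first_unsold m A = (LEAST j. j < m \<and> A j = None)"

lemma valid_order_first_unsold: "valid_order m (first_unsold m)"
  unfolding valid_order_def
proof (intro allI impI)
  fix A :: "nat \<Rightarrow> nat option"
  assume "dom A \<subseteq> {0..<m}" "dom A \<noteq> {0..<m}"
  then have "\<exists>j. j < m \<and> A j = None" by auto
  then have "first_unsold m A < m \<and> A (first_unsold m A) = None"
    unfolding first_unsold_def by (rule LeastI_ex)
  then show "first_unsold m A \<in> {0..<m} - dom A" by auto
qed

lemma valid_tiebreak_threat: "valid_tiebreak 2 (threat_tiebreak m)"
  unfolding valid_tiebreak_def threat_tiebreak_def by (auto simp: less_2_cases_iff)

lemma silent_Cons [simp]: "silent (b # h) \<longleftrightarrow> b 0 = 0 \<and> silent h"
  unfolding silent_def by auto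

lemma payment_silent: "silent h \<Longrightarrow> payment tb h 0 = 0"
  by (induction h) auto

lemma silent_playn_threat: "silent h \<Longrightarrow> silent (playn 2 threat_strategy k h)"
  by (induction k arbitrary: h) (auto simp: threat_strategy_def)

lemma bundle_value_unit_value_pos [simp]: "0 < i \<Longrightarrow> bundle_value m unit_value \<sigma> tb h i = 0"
  unfolding bundle_value_def unit_value_def by simp

abbreviation threat_utility :: "nat \<Rightarrow> history \<Rightarrow> nat \<Rightarrow> real" where
  "threat_utility m \<equiv> utility m unit_value (first_unsold m) (threat_tiebreak m)"

lemma threat_utility_Cons:
  "length h < m \<Longrightarrow> threat_utility m (b # h) 0
    = threat_utility m h 0 + (if threat_tiebreak m h b = 0 then 1 - b 0 else 0)"
  using utility_Cons[OF valid_order_first_unsold, of h m unit_value "threat_tiebreak m" b 0]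
  by (simp add: unit_value_def)

lemma buyer0_utility_playn_le:
  assumes "t 1 = threat_strategy 1" and "length h + k = m"
  shows "threat_utility m (playn 2 t k h) 0
    \<le> threat_utility m h 0 + (if silent h \<and> 0 < k then 1 else 0)"
  using assms(2)
proof (induction k arbitrary: h)
  case (Suc k)
  define b where "b = bidvec 2 t h"
  have len: "length h < m" "length h + 1 < m \<longleftrightarrow> 0 < k" using Suc.prems by auto
  have "b 1 = (if silent h then 0 else 1)" using assms(1) by (simp add: b_def threat_strategy_def)
  then have "(if threat_tiebreak m h b = 0 then 1 - b 0 else 0) + (if silent (b # h) \<and> 0 < k then 1 else 0)
      \<le> (if silent h \<and> 0 < Suc k then 1 else 0)"
    using len(2) by (auto simp: threat_tiebreak_def)
  moreover have "threat_utility m (playn 2 t k (b # h)) 0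
      \<le> threat_utility m (b # h) 0 + (if silent (b # h) \<and> 0 < k then 1 else 0)"
    by (rule Suc.IH) (use Suc.prems in simp)
  ultimately show ?case using threat_utility_Cons[OF len(1), of b] by (simp add: b_def)
qed simp

lemma buyer0_utility_playn_threat:
  assumes "length h + k = m"
  shows "threat_utility m (playn 2 threat_strategy k h) 0
    = threat_utility m h 0 + (if silent h \<and> 0 < k then 1 else 0)"
  using assms
proof (induction k arbitrary: h)
  case (Suc k)
  define b where "b = bidvec 2 threat_strategy h"
  have len: "length h < m" "length h + 1 < m \<longleftrightarrow> 0 < k" using Suc.prems by auto
  have "b 0 = b 1" "b 1 = (if silent h then 0 else 1)" by (simp_all add: b_def threat_strategy_def)
  then have "(if threat_tiebreak m h b = 0 then 1 - b 0 else 0) + (if silent (b # h) \<and> 0 < k then 1 else 0)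
      = (if silent h \<and> 0 < Suc k then 1 else 0)"
    using len(2) by (auto simp: threat_tiebreak_def)
  moreover have "threat_utility m (playn 2 threat_strategy k (b # h)) 0
      = threat_utility m (b # h) 0 + (if silent (b # h) \<and> 0 < k then 1 else 0)"
    by (rule Suc.IH) (use Suc.prems in simp)
  ultimately show ?case using threat_utility_Cons[OF len(1), of b] by (simp add: b_def)
qed simp

lemma buyer1_payment_le_playn:
  assumes "t 0 = threat_strategy 0"
  shows "payment (threat_tiebreak m) h 1 \<le> payment (threat_tiebreak m) (playn 2 t k h) 1"
proof (induction k arbitrary: h)
  case (Suc k)
  define b where "b = bidvec 2 t h"
  have "0 \<le> b 0" using assms by (simp add: b_def threat_strategy_def)
  then have "payment (threat_tiebreak m) h 1 \<le> payment (threat_tiebreak m) (b # h) 1"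
    by (auto simp: threat_tiebreak_def)
  also have "\<dots> \<le> payment (threat_tiebreak m) (playn 2 t k (b # h)) 1" by (rule Suc.IH)
  finally show ?case by (simp add: b_def)
qed simp

lemma buyer1_payment_playn_threat:
  "payment (threat_tiebreak m) (playn 2 threat_strategy k h) 1 = payment (threat_tiebreak m) h 1"
proof (induction k arbitrary: h)
  case (Suc k)
  define b where "b = bidvec 2 threat_strategy h"
  have "payment (threat_tiebreak m) (b # h) 1 = payment (threat_tiebreak m) h 1"
    by (cases "silent h") (auto simp: threat_tiebreak_def b_def threat_strategy_def)
  then show ?case using Suc.IH[of "b # h"] by (simp add: b_def)
qed simp

lemma is_SPE_threat: "is_SPE 2 m unit_value (first_unsold m) (threat_tiebreak m) threat_strategy"
  unfolding is_SPE_def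
proof (intro conjI allI impI)
  fix i h
  show "0 \<le> threat_strategy i h" by (simp add: threat_strategy_def)
next
  fix h i d
  assume h: "valid_node 2 h \<and> length h < m" and "i < (2::nat)"
  define k where "k = m - length h"
  have k: "length h + k = m" "0 < k" using h by (auto simp: k_def)
  show "threat_utility m (outcome 2 m (threat_strategy(i := d)) h) i
    \<le> threat_utility m (outcome 2 m threat_strategy h) i"
  proof (cases "i = 0")
    case True
    show ?thesis
      using buyer0_utility_playn_le[of "threat_strategy(0 := d)", OF _ k(1)]
        buyer0_utility_playn_threat[OF k(1)]
      unfolding outcome_def k_def[symmetric] True by simp
  next
    case False
    with \<open>i < 2\<close> have "i = 1" by simp
    then show ?thesis
      using buyer1_payment_le_playn[of "threat_strategy(1 := d)" m h k]
        buyer1_payment_playn_threat[of m k h]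
      unfolding \<open>i = 1\<close> outcome_def k_def[symmetric] utility_def by simp
  qed
qed

lemma welfare_threat_outcome:
  assumes "1 \<le> m"
  shows "welfare 2 m unit_value (first_unsold m) (threat_tiebreak m) (outcome 2 m threat_strategy []) = 1"
proof -
  define H where "H = outcome 2 m threat_strategy []"
  have "threat_utility m H 0 = 1"
    using buyer0_utility_playn_threat[of "[]" m m] assms
    by (simp add: H_def outcome_def utility_def bundle_value_def silent_def)
  moreover have "silent []" unfolding silent_def by simp
  then have "payment (threat_tiebreak m) H 0 = 0"
    unfolding H_def outcome_def using silent_playn_threat payment_silent by simp
  ultimately have "bundle_value m unit_value (first_unsold m) (threat_tiebreak m) H 0 = 1"
    unfolding utility_def by simp
  then show ?thesis unfolding H_def welfare_def by (simp add: numeral_2_eq_2)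
qed

lemma opt_unit_value: "real m \<le> opt 2 m unit_value"
proof -
  have "(\<lambda>j\<in>{0..<m}. 0) \<in> {0..<m} \<rightarrow>\<^sub>E {0..<2::nat}" by auto
  from allocation_welfare_le_opt[OF this, of unit_value] show ?thesis
    by (simp add: unit_value_def)
qed

lemma two_buyer_instance_with_low_welfare:
  assumes "1 \<le> m"
  shows "\<exists>(v::nat \<Rightarrow> nat \<Rightarrow> real) \<sigma> tb s.
    (\<forall>i j. 0 \<le> v i j) \<and> (\<forall>i j. v i j = v i 0) \<and>
    valid_order m \<sigma> \<and> valid_tiebreak 2 tb \<and> is_SPE 2 m v \<sigma> tb s \<and>
    0 < opt 2 m v \<and> real m * welfare 2 m v \<sigma> tb (outcome 2 m s []) \<le> opt 2 m v"
  using assms opt_unit_value[of m] welfare_threat_outcome valid_order_first_unsold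
    valid_tiebreak_threat is_SPE_threat
  by (intro exI[of _ unit_value] exI[of _ "first_unsold m"] exI[of _ "threat_tiebreak m"]
      exI[of _ threat_strategy]) (auto simp: unit_value_def)

theorem mainTheorem1:
  shows
  "(\<exists>c::real. c > 0 \<and>
     (\<forall>n m (v::nat \<Rightarrow> nat \<Rightarrow> real) \<sigma> tb s.
        1 \<le> n \<longrightarrow> 1 \<le> m \<longrightarrow> (\<forall>i j. 0 \<le> v i j) \<longrightarrow>
        valid_order m \<sigma> \<longrightarrow> valid_tiebreak n tb \<longrightarrow> is_SPE n m v \<sigma> tb s \<longrightarrow>
        welfare n m v \<sigma> tb (outcome n m s []) \<ge> c * opt n m v / real m))
   \<and>
   (\<exists>c'::real. c' > 0 \<and>
     (\<forall>m::nat. 1 \<le> m \<longrightarrow>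
        (\<exists>(v::nat \<Rightarrow> nat \<Rightarrow> real) \<sigma> tb s.
           (\<forall>i j. 0 \<le> v i j) \<and> (\<forall>i j. v i j = v i 0) \<and>
           valid_order m \<sigma> \<and> valid_tiebreak 2 tb \<and> is_SPE 2 m v \<sigma> tb s \<and>
           opt 2 m v > 0 \<and>
           opt 2 m v \<ge> c' * real m * welfare 2 m v \<sigma> tb (outcome 2 m s []))))"
  using SPE_welfare_ge_half_opt_div two_buyer_instance_with_low_welfare
  by (intro conjI exI[of _ "1/2"] exI[of _ "1::real"]) auto

end
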